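(* Let $f \colon \mathbb{R} \to \mathbb{R}$ be given by $f(x) = \ln\big(\frac{\sinh x}{x}\big) - \frac{x^2}{6}$ for $x \neq 0$ and $f(0) = 0$. Then $f$ is continuous on $\mathbb{R}$, is even, and is strictly decreasing on $[0,+\infty)$. Consequently, the mapping $[0,+\infty) \ni x \mapsto x f(x)$ is subadditive, i.e. $(x+y)f(x+y) \le x f(x) + y f(y)$ for all $x,y \ge 0$. *)

theory Defs
  imports "HOL-Analysis.Analysis"
begin

definition sinh_log_fun :: "real \<Rightarrow> real" where
  "sinh_log_fun x = (if x = 0 then 0 else ln (sinh x / x) - x^2 / 6)"

end

theory Submission
  imports Defs
begin

text \<open>Away from 0 the derivative of \<open>f\<close> is \<open>coth x - 1/x - x/3\<close>, whose sign on
  \<open>x > 0\<close> is that of \<open>3 (x cosh x - sinh x) - x\<^sup>2 sinh x\<close>; this expression vanishes at 0 and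
  its derivative is \<open>-x (x cosh x - sinh x) < 0\<close>, because \<open>x cosh x - sinh x\<close> in turn vanishes
  at 0 and has derivative \<open>x sinh x > 0\<close>. At 0, continuity follows from \<open>sinh x / x \<rightarrow> 1\<close>.
  Subadditivity of \<open>x f(x)\<close> holds for every \<open>f\<close> that is antitone on \<open>[0, \<infinity>)\<close>, since
  \<open>(x + y) f(x + y) = x f(x + y) + y f(x + y)\<close>.\<close>

lemma antimono_on_imp_mult_self_subadditive:
  fixes f :: "'a::linordered_idom \<Rightarrow> 'a"
  assumes f: "antimono_on {0..} f" and x: "0 \<le> x" and y: "0 \<le> y"
  shows "(x + y) * f (x + y) \<le> x * f x + y * f y"
proof -
  have "f (x + y) \<le> f x" "f (x + y) \<le> f y"
    using x y by (auto intro: monotone_onD[OF f])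
  then have "x * f (x + y) \<le> x * f x" "y * f (x + y) \<le> y * f y"
    using x y by (simp_all add: mult_left_mono)
  then show ?thesis
    by (simp add: distrib_right)
qed

lemma sinh_less_mult_cosh:
  fixes x :: real
  assumes x: "0 < x"
  shows "sinh x < x * cosh x"
proof -
  have "(\<lambda>t. t * cosh t - sinh t) 0 < (\<lambda>t. t * cosh t - sinh t) x"
  proof (rule DERIV_pos_imp_increasing_open[OF x])
    fix t :: real
    assume "0 < t" "t < x"
    then show "\<exists>d. ((\<lambda>t. t * cosh t - sinh t) has_real_derivative d) (at t) \<and> 0 < d"
      by (intro exI[of _ "t * sinh t"] conjI)
        (auto intro!: derivative_eq_intros)
  qed (intro continuous_intros)
  then show ?thesis
    by simp
qed

lemma mult_cosh_minus_sinh_less: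
  fixes x :: real
  assumes x: "0 < x"
  shows "3 * (x * cosh x - sinh x) < x\<^sup>2 * sinh x"
proof -
  let ?g = "\<lambda>t::real. t\<^sup>2 * sinh t - 3 * (t * cosh t - sinh t)"
  have "?g 0 < ?g x"
  proof (rule DERIV_pos_imp_increasing_open[OF x])
    fix t :: real
    assume t: "0 < t" "t < x"
    have "(?g has_real_derivative t * (t * cosh t - sinh t)) (at t)"
      by (auto intro!: derivative_eq_intros simp: algebra_simps power2_eq_square)
    moreover have "0 < t * (t * cosh t - sinh t)"
      using sinh_less_mult_cosh[of t] t by simp
    ultimately show "\<exists>d. (?g has_real_derivative d) (at t) \<and> 0 < d"
      by blast
  qed (intro continuous_intros)
  then show ?thesis
    by simp
qed

lemma sinh_div_self_pos:
  fixes x :: real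
  assumes "x \<noteq> 0"
  shows "0 < sinh x / x"
  using assms by (cases "0 < x") (auto simp: zero_less_divide_iff sinh_real_pos_iff sinh_real_neg_iff)

lemma tendsto_sinh_div_self: "((\<lambda>x. sinh x / x) \<longlongrightarrow> (1::real)) (at 0)"
proof -
  have "(sinh has_real_derivative cosh 0) (at (0::real))"
    by (auto intro!: derivative_eq_intros)
  then show ?thesis
    by (simp add: has_field_derivative_iff)
qed

lemma sinh_log_fun_has_real_derivative:
  assumes x: "x \<noteq> 0"
  shows "(sinh_log_fun has_real_derivative cosh x / sinh x - 1 / x - x / 3) (at x)"
proof -
  have "sinh x \<noteq> 0"
    using x by simp
  then have "((\<lambda>t. ln (sinh t / t) - t\<^sup>2 / 6) has_real_derivative
      cosh x / sinh x - 1 / x - x / 3) (at x)"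
    using x sinh_div_self_pos[OF x]
    by (auto intro!: derivative_eq_intros simp: divide_simps power2_eq_square)
  then show ?thesis
    by (rule has_field_derivative_transform_within_open[where S = "- {0}"])
      (use x in \<open>auto simp: sinh_log_fun_def\<close>)
qed

lemma sinh_log_fun_deriv_neg:
  fixes x :: real
  assumes x: "0 < x"
  shows "cosh x / sinh x - 1 / x - x / 3 < 0"
proof -
  have "0 < sinh x"
    using x by (simp add: sinh_real_pos_iff)
  then show ?thesis
    using mult_cosh_minus_sinh_less[OF x] x
    by (simp add: field_simps power2_eq_square)
qed

lemma continuous_on_sinh_log_fun: "continuous_on UNIV sinh_log_fun"
proof -
  have "isCont sinh_log_fun x" for x
  proof (cases "x = 0")
    case False
    then show ?thesis
      using sinh_log_fun_has_real_derivative DERIV_isCont by blast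
  next
    case True
    have "((\<lambda>x::real. ln (sinh x / x) - x\<^sup>2 / 6) \<longlongrightarrow> ln 1 - 0\<^sup>2 / 6) (at 0)"
      by (intro tendsto_intros tendsto_sinh_div_self) auto
    then have "((\<lambda>x::real. ln (sinh x / x) - x\<^sup>2 / 6) \<longlongrightarrow> sinh_log_fun 0) (at 0)"
      by (simp add: sinh_log_fun_def)
    then have "(sinh_log_fun \<longlongrightarrow> sinh_log_fun 0) (at 0)"
      by (rule Lim_transform_within[OF _ zero_less_one]) (simp add: sinh_log_fun_def)
    then show ?thesis
      using True by (simp add: isCont_def)
  qed
  then show ?thesis
    by (simp add: continuous_on_eq_continuous_at)
qed

lemma sinh_log_fun_minus: "sinh_log_fun (- x) = sinh_log_fun x"
  by (simp add: sinh_log_fun_def)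

lemma strict_antimono_on_sinh_log_fun: "strict_antimono_on {0..} sinh_log_fun"
proof (rule monotone_onI)
  fix x y :: real
  assume "x \<in> {0..}" "x < y"
  show "sinh_log_fun y < sinh_log_fun x"
  proof (rule DERIV_neg_imp_decreasing_open[OF \<open>x < y\<close>])
    fix t
    assume "x < t" "t < y"
    with \<open>x \<in> {0..}\<close> have t: "0 < t"
      by simp
    show "\<exists>d. (sinh_log_fun has_real_derivative d) (at t) \<and> d < 0"
      using sinh_log_fun_has_real_derivative[of t] sinh_log_fun_deriv_neg[OF t] t by auto
  next
    show "continuous_on {x..y} sinh_log_fun"
      using continuous_on_sinh_log_fun by (rule continuous_on_subset) simp
  qed
qed

theorem mainTheorem2:
  shows "continuous_on UNIV sinh_log_fun
    \<and> (\<forall>x. sinh_log_fun (- x) = sinh_log_fun x)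
    \<and> (\<forall>x y. 0 \<le> x \<longrightarrow> x < y \<longrightarrow> sinh_log_fun y < sinh_log_fun x)
    \<and> (\<forall>x y. 0 \<le> x \<longrightarrow> 0 \<le> y \<longrightarrow>
         (x + y) * sinh_log_fun (x + y) \<le> x * sinh_log_fun x + y * sinh_log_fun y)"
proof (intro conjI allI impI)
  fix x y :: real
  assume "0 \<le> x" "x < y"
  then show "sinh_log_fun y < sinh_log_fun x"
    by (intro monotone_onD[OF strict_antimono_on_sinh_log_fun]) simp_all
next
  fix x y :: real
  assume "0 \<le> x" "0 \<le> y"
  moreover have "antimono_on {0..} sinh_log_fun"
    using strict_antimono_on_sinh_log_fun by (simp add: strict_antimono_iff_antimono)
  ultimately show "(x + y) * sinh_log_fun (x + y) \<le> x * sinh_log_fun x + y * sinh_log_fun y"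
    by (intro antimono_on_imp_mult_self_subadditive)
qed (simp_all add: continuous_on_sinh_log_fun sinh_log_fun_minus)

end
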